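(* Let $X$ be a real Hausdorff locally convex topological vector space, let $f:X\to\overline{\mathbb R}$ be proper, convex and lower semicontinuous, and let $U\subseteq\operatorname{dom} f$ be self-segment-dense in $\operatorname{dom} f$. Then $f=\overline{f_U}$ on $\operatorname{co}(U)$ and $\overline{f_U}=\overline{f_{\operatorname{co}(U)}}$ on $X$.
   Context: $\overline{\mathbb R}=\mathbb R\cup\{\pm\infty\}$; $\operatorname{dom} f=\{x:f(x)<+\infty\}$; proper: $\operatorname{dom} f\ne\emptyset$ and $f>-\infty$. $\operatorname{co}$ is the convex hull. For $W\subseteq\operatorname{dom} f$: $\operatorname{epi} f_W=\{(w,r)\in W\times\mathbb R:f(w)\le r\}$ and $\overline{f_W}$ is the function on $X$ whose epigraph is $\operatorname{cl}(\operatorname{epi} f_W)$ in $X\times\mathbb R$, i.e. $\overline{f_W}(x)=\inf\{r:(x,r)\in\operatorname{cl}(\operatorname{epi} f_W)\}$ ($\inf\emptyset=+\infty$). $[x,y]=\{x+t(y-x):t\in[0,1]\}$. Self-segment-dense: for convex $V$ and $U\subseteq V$, $U$ is self-segment-dense in $V$ if $V\subseteq\operatorname{cl}U$ and for all $x,y\in U$, $[x,y]\cap U$ is dense in $[x,y]$. *)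

theory Defs
  imports "HOL-Analysis.Analysis"
begin

definition lc_tvs :: "'a::{real_vector, t2_space} itself \<Rightarrow> bool" where
  "lc_tvs _ \<longleftrightarrow>
     continuous_on (UNIV :: ('a \<times> 'a) set) (\<lambda>p. fst p + snd p) \<and>
     continuous_on (UNIV :: (real \<times> 'a) set) (\<lambda>p. fst p *\<^sub>R snd p) \<and>
     (\<forall>x::'a. \<forall>W. open W \<and> x \<in> W \<longrightarrow> (\<exists>V. open V \<and> convex V \<and> x \<in> V \<and> V \<subseteq> W))"

definition edom :: "('a \<Rightarrow> ereal) \<Rightarrow> 'a set" where
  "edom f = {x. f x < \<infinity>}"

definition proper_fun :: "('a \<Rightarrow> ereal) \<Rightarrow> bool" where
  "proper_fun f \<longleftrightarrow> edom f \<noteq> {} \<and> (\<forall>x. f x > -\<infinity>)"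

definition epi_on :: "('a \<Rightarrow> ereal) \<Rightarrow> 'a set \<Rightarrow> ('a \<times> real) set" where
  "epi_on f W = {(w, r). w \<in> W \<and> f w \<le> ereal r}"

definition convex_efun :: "('a::real_vector \<Rightarrow> ereal) \<Rightarrow> bool" where
  "convex_efun f \<longleftrightarrow> convex (epi_on f UNIV)"

definition lsc_efun :: "('a::topological_space \<Rightarrow> ereal) \<Rightarrow> bool" where
  "lsc_efun f \<longleftrightarrow> (\<forall>c::ereal. closed {x. f x \<le> c})"

text \<open>The function whose epigraph is the closure of epi f_W (inf of the empty set is +\<infinity>).\<close>
definition closure_fun :: "('a::topological_space \<Rightarrow> ereal) \<Rightarrow> 'a set \<Rightarrow> 'a \<Rightarrow> ereal" where
  "closure_fun f W x = Inf {ereal r | r. (x, r) \<in> closure (epi_on f W)}"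

definition self_segment_dense :: "'a::{real_vector, topological_space} set \<Rightarrow> 'a set \<Rightarrow> bool" where
  "self_segment_dense U V \<longleftrightarrow> U \<subseteq> V \<and> V \<subseteq> closure U \<and>
     (\<forall>x\<in>U. \<forall>y\<in>U. closed_segment x y \<subseteq> closure (closed_segment x y \<inter> U))"

end

theory Submission
  imports Defs
begin

text \<open>
  Let F be the closure of epi f_U and V the set of points x of dom f with (x, r) in F for all
  r >= f x. As f is lower semicontinuous, F lies in epi f, so f <= cl f_U everywhere; conversely
  cl f_U <= f on V, and epi f_W lies in F whenever W is contained in V. Both claims thus reduce to
  co U being contained in V.

  V contains U and is radially closed in dom f: if x, p are in dom f and (1-s)x + sp lies in V for
  arbitrarily small s > 0, then x is in V, because f is bounded by the chord on [x, p] and F is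
  closed. Now co S is contained in V for finite S in U by induction on |S|. Write S = A + {b, c} and
  a point of co S as z = mu y + (1-mu) m with y in co A and m in [c, b]. Moving z towards
  p = mu y + (1-mu) b moves m towards b along [c, b], where U is dense; whenever the moved point w
  of [c, b] lies in U, the moved point of z lies in co (A + {w}), which is covered by the induction
  hypothesis. Radial closedness gives z in V.
\<close>

lemma lc_tvs_continuous_on_add:
  assumes "lc_tvs TYPE('a::{real_vector,t2_space})"
    and "continuous_on S g" "continuous_on S h"
  shows "continuous_on S (\<lambda>x. g x + (h x :: 'a))"
proof -
  have "continuous_on (UNIV :: ('a \<times> 'a) set) (\<lambda>p. fst p + snd p)"
    using assms(1) unfolding lc_tvs_def by blast
  from continuous_on_compose2[OF this continuous_on_Pair[OF assms(2,3)]] show ?thesis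
    by simp
qed

lemma lc_tvs_continuous_on_scaleR:
  assumes "lc_tvs TYPE('a::{real_vector,t2_space})"
    and "continuous_on S r" "continuous_on S h"
  shows "continuous_on S (\<lambda>x. r x *\<^sub>R (h x :: 'a))"
proof -
  have "continuous_on (UNIV :: (real \<times> 'a) set) (\<lambda>p. fst p *\<^sub>R snd p)"
    using assms(1) unfolding lc_tvs_def by blast
  from continuous_on_compose2[OF this continuous_on_Pair[OF assms(2,3)]] show ?thesis
    by simp
qed

lemma lc_tvs_continuous_on_segment:
  assumes "lc_tvs TYPE('a::{real_vector,t2_space})"
  shows "continuous_on S (\<lambda>s::real. (1 - s) *\<^sub>R a + s *\<^sub>R (b :: 'a))"
  by (intro lc_tvs_continuous_on_add[OF assms] lc_tvs_continuous_on_scaleR[OF assms]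
      continuous_intros)

lemma closed_segment_window_meets:
  fixes b c :: "'a::{real_vector,t2_space}"
  assumes lc: "lc_tvs TYPE('a)"
    and dense: "closed_segment c b \<subseteq> closure (closed_segment c b \<inter> U)"
    and "c \<noteq> b" and t: "0 \<le> t0" "t0 < t1" "t1 \<le> 1"
  shows "\<exists>t. t0 < t \<and> t < t1 \<and> (1 - t) *\<^sub>R c + t *\<^sub>R b \<in> U"
proof -
  define h where "h = (\<lambda>s::real. (1 - s) *\<^sub>R c + s *\<^sub>R b)"
  have h_inj: "s = s'" if "h s = h s'" for s s'
  proof -
    have "(s - s') *\<^sub>R (b - c) = h s - h s'" by (simp add: h_def algebra_simps)
    with that \<open>c \<noteq> b\<close> show ?thesis by simp
  qed
  define K where "K = h ` ({0..t0} \<union> {t1..1})"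
  have "closed K" unfolding K_def
    by (intro compact_imp_closed compact_continuous_image compact_Un compact_Icc)
      (simp add: h_def lc_tvs_continuous_on_segment[OF lc])
  have "h ((t0 + t1) / 2) \<in> closed_segment c b"
    using t unfolding h_def closed_segment_def by (intro CollectI exI[of _ "(t0 + t1) / 2"]) auto
  moreover have "h ((t0 + t1) / 2) \<notin> K"
    using t h_inj[of _ "(t0 + t1) / 2"] unfolding K_def by fastforce
  ultimately have "- K \<inter> closure (closed_segment c b \<inter> U) \<noteq> {}"
    using dense by blast
  then have "- K \<inter> (closed_segment c b \<inter> U) \<noteq> {}"
    using open_Int_closure_eq_empty[of "- K"] \<open>closed K\<close> by (auto simp: open_Compl)
  then obtain t where "0 \<le> t" "t \<le> 1" "h t \<notin> K" "h t \<in> U"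
    unfolding closed_segment_def h_def by blast
  then show ?thesis unfolding K_def h_def by force
qed

lemma islimpt_segment_points:
  fixes b c m :: "'a::{real_vector,t2_space}"
  assumes lc: "lc_tvs TYPE('a)"
    and dense: "closed_segment c b \<subseteq> closure (closed_segment c b \<inter> U)"
    and "b \<in> U" and m: "m \<in> closed_segment c b"
  shows "0 islimpt {s. 0 < s \<and> s \<le> 1 \<and> (1 - s) *\<^sub>R m + s *\<^sub>R b \<in> U}"
  unfolding islimpt_approachable_real
proof (intro allI impI)
  fix e :: real assume "e > 0"
  obtain t0 where t0: "0 \<le> t0" "t0 \<le> 1" "m = (1 - t0) *\<^sub>R c + t0 *\<^sub>R b"
    using m unfolding closed_segment_def by blast
  show "\<exists>s\<in>{s. 0 < s \<and> s \<le> 1 \<and> (1 - s) *\<^sub>R m + s *\<^sub>R b \<in> U}. s \<noteq> 0 \<and> \<bar>s - 0\<bar> < e"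
  proof (cases "m = b")
    case True
    then show ?thesis using \<open>b \<in> U\<close> \<open>e > 0\<close>
      by (intro bexI[of _ "min (e / 2) 1"]) (auto simp: algebra_simps)
  next
    case False
    with t0 have "c \<noteq> b" "t0 < 1" by (auto simp: order_le_less)
    define d where "d = min e 1"
    have "d > 0" "d \<le> 1" "d \<le> e" using \<open>e > 0\<close> by (auto simp: d_def)
    have "d * (1 - t0) \<le> 1 - t0"
      using \<open>d \<le> 1\<close> \<open>t0 < 1\<close> by (simp add: mult_left_le_one_le)
    then have "t0 + d * (1 - t0) \<le> 1" by linarith
    moreover have "t0 < t0 + d * (1 - t0)" using \<open>d > 0\<close> \<open>t0 < 1\<close> by simp
    ultimately obtain t where t: "t0 < t" "t < t0 + d * (1 - t0)" "(1 - t) *\<^sub>R c + t *\<^sub>R b \<in> U"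
      using closed_segment_window_meets[OF lc dense \<open>c \<noteq> b\<close> \<open>0 \<le> t0\<close>] by blast
    define s where "s = (t - t0) / (1 - t0)"
    have "0 < s" "s < d" using t \<open>t0 < 1\<close> by (simp_all add: s_def field_simps)
    moreover have "(1 - s) *\<^sub>R m + s *\<^sub>R b = (1 - t) *\<^sub>R c + t *\<^sub>R b"
    proof -
      have "s * (1 - t0) = t - t0" using \<open>t0 < 1\<close> by (simp add: s_def)
      then have "(1 - s) * (1 - t0) = 1 - t" "(1 - s) * t0 + s = t"
        by (simp_all add: algebra_simps)
      moreover have "(1 - s) *\<^sub>R m + s *\<^sub>R b
          = ((1 - s) * (1 - t0)) *\<^sub>R c + ((1 - s) * t0 + s) *\<^sub>R b"
        by (simp add: t0(3) scaleR_add_right scaleR_add_left add.assoc)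
      ultimately show ?thesis by simp
    qed
    ultimately show ?thesis using t(3) \<open>d \<le> 1\<close> \<open>d \<le> e\<close> by (intro bexI[of _ s]) auto
  qed
qed

definition radially_closed :: "'a::real_vector set \<Rightarrow> 'a set \<Rightarrow> bool" where
  "radially_closed D V \<longleftrightarrow> (\<forall>x\<in>D. \<forall>p\<in>D.
     0 islimpt {s. 0 < s \<and> s \<le> 1 \<and> (1 - s) *\<^sub>R x + s *\<^sub>R p \<in> V} \<longrightarrow> x \<in> V)"

lemma convex_hull_insert_insert_decomp:
  fixes z b c :: "'a::real_vector"
  assumes "z \<in> convex hull (insert b (insert c A))"
  obtains \<mu> y m where "0 \<le> \<mu>" "\<mu> \<le> 1" "\<mu> = 0 \<or> y \<in> convex hull A"
    "m \<in> closed_segment c b" "z = \<mu> *\<^sub>R y + (1 - \<mu>) *\<^sub>R m"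
proof (cases "A = {}")
  case True
  then have "z \<in> closed_segment c b" using assms by (simp add: segment_convex_hull insert_commute)
  then show ?thesis using that[of 0] by simp
next
  case False
  obtain u v q where "0 \<le> u" "0 \<le> v" "u + v = 1" "q \<in> convex hull (insert c A)"
    "z = u *\<^sub>R b + v *\<^sub>R q"
    using assms convex_hull_insert[of "insert c A" b] by auto
  moreover obtain u' v' y where "0 \<le> u'" "0 \<le> v'" "u' + v' = 1" "y \<in> convex hull A"
    "q = u' *\<^sub>R c + v' *\<^sub>R y"
    using \<open>q \<in> convex hull (insert c A)\<close> convex_hull_insert[OF False, of c] by auto
  moreover have "b \<in> convex hull {y, c, b}" "c \<in> convex hull {y, c, b}" "y \<in> convex hull {y, c, b}"
    by (simp_all add: hull_inc)
  ultimately have "z \<in> convex hull (insert y {c, b})"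
    by (metis convexD convex_convex_hull)
  then obtain \<mu> \<nu> m where "0 \<le> \<mu>" "0 \<le> \<nu>" "\<mu> + \<nu> = 1" "m \<in> closed_segment c b"
    "z = \<mu> *\<^sub>R y + \<nu> *\<^sub>R m"
    using convex_hull_insert[of "{c, b}" y] by (auto simp: segment_convex_hull)
  then show ?thesis using that[of \<mu> y m] \<open>y \<in> convex hull A\<close> by auto
qed

lemma convex_hull_insert_combination:
  fixes y w :: "'a::real_vector"
  assumes "0 \<le> \<mu>" "\<mu> \<le> 1" "\<mu> = 0 \<or> y \<in> convex hull A"
  shows "\<mu> *\<^sub>R y + (1 - \<mu>) *\<^sub>R w \<in> convex hull (insert w A)"
proof (cases "\<mu> = 0")
  case True
  then show ?thesis by (simp add: hull_inc)
next
  case False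
  then have "y \<in> convex hull (insert w A)" using assms(3) hull_mono[of A "insert w A"] by blast
  moreover have "w \<in> convex hull (insert w A)" by (simp add: hull_inc)
  ultimately show ?thesis using assms by (intro convexD convex_convex_hull) auto
qed

lemma finite_hull_subset_radially_closed:
  fixes U V D :: "'a::{real_vector,t2_space} set"
  assumes lc: "lc_tvs TYPE('a)" and "convex D" "U \<subseteq> D" "U \<subseteq> V"
    and dense: "\<And>x y. x \<in> U \<Longrightarrow> y \<in> U \<Longrightarrow>
      closed_segment x y \<subseteq> closure (closed_segment x y \<inter> U)"
    and rc: "radially_closed D V"
  shows "finite S \<Longrightarrow> S \<subseteq> U \<Longrightarrow> convex hull S \<subseteq> V"
proof (induction "card S" arbitrary: S rule: less_induct)
  case less
  show ?case
  proof (cases "card S \<le> 1")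
    case True
    then have "S = {} \<or> (\<exists>b. S = {b})"
      using less.prems(1) by (metis One_nat_def card_0_eq card_1_singletonE le_Suc_eq le_zero_eq)
    then show ?thesis using less.prems(2) \<open>U \<subseteq> V\<close> by auto
  next
    case False
    then obtain b c where "b \<in> S" "c \<in> S" "b \<noteq> c"
      using less.prems(1) card_le_Suc0_iff_eq by (metis One_nat_def)
    define A where "A = S - {b, c}"
    have S: "S = insert b (insert c A)" using \<open>b \<in> S\<close> \<open>c \<in> S\<close> by (auto simp: A_def)
    have "b \<in> U" "c \<in> U" "finite A" "A \<subseteq> U"
      using less.prems \<open>b \<in> S\<close> \<open>c \<in> S\<close> by (auto simp: A_def)
    have hull_insert_A: "convex hull (insert w A) \<subseteq> V" if "w \<in> U" for w
    proof (rule less.hyps)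
      have "card (insert w A) \<le> Suc (card A)" using \<open>finite A\<close> by (simp add: card_insert_if)
      also have "\<dots> < card (insert b (insert c A))"
        using \<open>finite A\<close> \<open>b \<noteq> c\<close> by (simp add: A_def)
      finally show "card (insert w A) < card S" using S by simp
    qed (use \<open>finite A\<close> \<open>A \<subseteq> U\<close> that in auto)
    have "convex hull S \<subseteq> D" using less.prems(2) \<open>U \<subseteq> D\<close> \<open>convex D\<close> by (intro hull_minimal) auto
    show ?thesis
    proof
      fix z assume "z \<in> convex hull S"
      then obtain \<mu> y m where \<mu>: "0 \<le> \<mu>" "\<mu> \<le> 1" "\<mu> = 0 \<or> y \<in> convex hull A"
        and m: "m \<in> closed_segment c b" and z: "z = \<mu> *\<^sub>R y + (1 - \<mu>) *\<^sub>R m"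
        using convex_hull_insert_insert_decomp S by metis
      define p where "p = \<mu> *\<^sub>R y + (1 - \<mu>) *\<^sub>R b"
      have "p \<in> convex hull S"
        using convex_hull_insert_combination[OF \<mu>, of b] hull_mono[of "insert b A" S] S
        unfolding p_def by auto
      have ray: "(1 - s) *\<^sub>R z + s *\<^sub>R p = \<mu> *\<^sub>R y + (1 - \<mu>) *\<^sub>R ((1 - s) *\<^sub>R m + s *\<^sub>R b)"
        for s :: real
        by (simp add: z p_def algebra_simps)
      have on_ray: "(1 - s) *\<^sub>R z + s *\<^sub>R p \<in> V" if "(1 - s) *\<^sub>R m + s *\<^sub>R b \<in> U" for s
        unfolding ray using convex_hull_insert_combination[OF \<mu>] hull_insert_A[OF that] ..
      have "0 islimpt {s. 0 < s \<and> s \<le> 1 \<and> (1 - s) *\<^sub>R z + s *\<^sub>R p \<in> V}"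
        by (rule islimpt_subset[OF islimpt_segment_points[OF lc dense[OF \<open>c \<in> U\<close> \<open>b \<in> U\<close>]
              \<open>b \<in> U\<close> m]]) (auto intro: on_ray)
      then show "z \<in> V"
        using rc \<open>z \<in> convex hull S\<close> \<open>p \<in> convex hull S\<close> \<open>convex hull S \<subseteq> D\<close>
        unfolding radially_closed_def by blast
    qed
  qed
qed

lemma convex_hull_subset_radially_closed:
  fixes U V D :: "'a::{real_vector,t2_space} set"
  assumes "lc_tvs TYPE('a)" "convex D" "U \<subseteq> D" "U \<subseteq> V"
    and "\<And>x y. x \<in> U \<Longrightarrow> y \<in> U \<Longrightarrow>
      closed_segment x y \<subseteq> closure (closed_segment x y \<inter> U)"
    and "radially_closed D V"
  shows "convex hull U \<subseteq> V"
proof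
  fix x assume "x \<in> convex hull U"
  then obtain S u where S: "finite S" "S \<subseteq> U" "\<forall>v\<in>S. 0 \<le> u v" "sum u S = 1"
    and x: "x = (\<Sum>v\<in>S. u v *\<^sub>R v)"
    unfolding convex_hull_explicit by blast
  have "x \<in> convex hull S"
    unfolding convex_hull_explicit using S x by blast
  with S show "x \<in> V" using finite_hull_subset_radially_closed[OF assms] by blast
qed

lemma closed_epi_on_UNIV:
  assumes "lsc_efun f"
  shows "closed (epi_on f UNIV)"
proof -
  have "epi_on f UNIV = (\<Inter>q. {x. f x \<le> ereal q} \<times> UNIV \<union> UNIV \<times> {q..})"
  proof (intro set_eqI iffI)
    fix z assume "z \<in> (\<Inter>q. {x. f x \<le> ereal q} \<times> UNIV \<union> UNIV \<times> {q..})"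
    then have "f (fst z) \<le> ereal (snd z) + ereal e" if "e > 0" for e
      using that by (auto elim!: allE[of _ "snd z + e"])
    then show "z \<in> epi_on f UNIV" unfolding epi_on_def by (auto intro: ereal_le_epsilon2)
  qed (auto simp: epi_on_def not_le intro: order_trans)
  moreover have "closed {x. f x \<le> ereal q}" for q using assms unfolding lsc_efun_def by blast
  ultimately show ?thesis by (auto intro!: closed_INT closed_Un closed_Times)
qed

lemma convex_efun_le_combination:
  assumes "convex_efun f" "f x \<le> ereal r" "f p \<le> ereal q" "0 \<le> s" "s \<le> 1"
  shows "f ((1 - s) *\<^sub>R x + s *\<^sub>R p) \<le> ereal ((1 - s) * r + s * q)"
proof -
  have "(1 - s) *\<^sub>R (x, r) + s *\<^sub>R (p, q) \<in> epi_on f UNIV"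
    using assms unfolding convex_efun_def by (intro convexD) (auto simp: epi_on_def)
  then show ?thesis by (simp add: epi_on_def)
qed

lemma edom_le_ereal:
  assumes "x \<in> edom f"
  obtains r where "f x \<le> ereal r"
  using assms unfolding edom_def by (cases "f x") auto

lemma convex_edom:
  assumes "convex_efun f"
  shows "convex (edom f)"
proof (rule convexI)
  fix x p and u v :: real
  assume "x \<in> edom f" "p \<in> edom f" "0 \<le> u" "0 \<le> v" "u + v = 1"
  moreover have "u = 1 - v" using \<open>u + v = 1\<close> by simp
  moreover obtain r q where "f x \<le> ereal r" "f p \<le> ereal q"
    using \<open>x \<in> edom f\<close> \<open>p \<in> edom f\<close> edom_le_ereal by metis
  ultimately have "f (u *\<^sub>R x + v *\<^sub>R p) \<le> ereal (u * r + v * q)"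
    using convex_efun_le_combination[OF assms, of x r p q v] by simp
  then show "u *\<^sub>R x + v *\<^sub>R p \<in> edom f" unfolding edom_def by (auto intro: le_less_trans)
qed

definition epi_fibre_in :: "('a \<Rightarrow> ereal) \<Rightarrow> ('a \<times> real) set \<Rightarrow> 'a set" where
  "epi_fibre_in f F = {x \<in> edom f. \<forall>r. f x \<le> ereal r \<longrightarrow> (x, r) \<in> F}"

lemma radially_closed_epi_fibre_in:
  fixes f :: "'a::{real_vector,t2_space} \<Rightarrow> ereal"
  assumes lc: "lc_tvs TYPE('a)" and "convex_efun f" and "closed F"
  shows "radially_closed (edom f) (epi_fibre_in f F)"
  unfolding radially_closed_def
proof (intro ballI impI)
  fix x p assume "x \<in> edom f" "p \<in> edom f"
  define T where "T = {s. 0 < s \<and> s \<le> 1 \<and> (1 - s) *\<^sub>R x + s *\<^sub>R p \<in> epi_fibre_in f F}"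
  assume "0 islimpt T"
  obtain q where "f p \<le> ereal q" using \<open>p \<in> edom f\<close> by (rule edom_le_ereal)
  have "(x, r) \<in> F" if "f x \<le> ereal r" for r
  proof -
    define h where "h = (\<lambda>s::real. ((1 - s) *\<^sub>R x + s *\<^sub>R p, (1 - s) * r + s * q))"
    have "continuous_on UNIV h"
      unfolding h_def by (intro continuous_on_Pair lc_tvs_continuous_on_segment[OF lc] continuous_intros)
    then have "(h \<longlongrightarrow> h 0) (at 0 within T)"
      by (meson UNIV_I continuous_on_def subset_UNIV tendsto_within_subset)
    moreover have "h s \<in> F" if "s \<in> T" for s
      using that convex_efun_le_combination[OF \<open>convex_efun f\<close> \<open>f x \<le> ereal r\<close> \<open>f p \<le> ereal q\<close>]
      unfolding T_def epi_fibre_in_def h_def by auto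
    moreover have "at 0 within T \<noteq> bot" using \<open>0 islimpt T\<close> by (simp add: trivial_limit_within)
    ultimately have "h 0 \<in> F"
      by (intro Lim_in_closed_set[OF \<open>closed F\<close>]) (auto simp: eventually_at_filter)
    then show ?thesis by (simp add: h_def)
  qed
  with \<open>x \<in> edom f\<close> show "x \<in> epi_fibre_in f F" unfolding epi_fibre_in_def by blast
qed

lemma subset_epi_fibre_in_closure:
  assumes "U \<subseteq> edom f"
  shows "U \<subseteq> epi_fibre_in f (closure (epi_on f U))"
  using assms closure_subset[of "epi_on f U"] unfolding epi_fibre_in_def epi_on_def by blast

lemma closure_epi_on_eq:
  assumes "U \<subseteq> W" "W \<subseteq> epi_fibre_in f (closure (epi_on f U))"
  shows "closure (epi_on f W) = closure (epi_on f U)"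
proof
  have "epi_on f W \<subseteq> closure (epi_on f U)"
    using assms(2) unfolding epi_fibre_in_def epi_on_def by blast
  then show "closure (epi_on f W) \<subseteq> closure (epi_on f U)"
    by (simp add: closure_minimal)
  show "closure (epi_on f U) \<subseteq> closure (epi_on f W)"
    using assms(1) by (intro closure_mono) (auto simp: epi_on_def)
qed

lemma le_closure_fun:
  assumes "lsc_efun f"
  shows "f x \<le> closure_fun f W x"
proof -
  have "closure (epi_on f W) \<subseteq> epi_on f UNIV"
    by (intro closure_minimal closed_epi_on_UNIV[OF assms]) (auto simp: epi_on_def)
  then show ?thesis
    unfolding closure_fun_def by (intro Inf_greatest) (auto simp: epi_on_def)
qed

lemma closure_fun_le:
  assumes "x \<in> epi_fibre_in f (closure (epi_on f W))"
  shows "closure_fun f W x \<le> f x"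
proof (rule ereal_le_real)
  fix r assume "f x \<le> ereal r"
  with assms have "(x, r) \<in> closure (epi_on f W)" unfolding epi_fibre_in_def by blast
  then show "closure_fun f W x \<le> ereal r" unfolding closure_fun_def by (blast intro: Inf_lower)
qed

theorem mainTheorem8:
  fixes f :: "'a::{real_vector, t2_space} \<Rightarrow> ereal" and U :: "'a set"
  assumes "lc_tvs TYPE('a)"
    and "proper_fun f" and "convex_efun f" and "lsc_efun f"
    and "U \<subseteq> edom f"
    and "self_segment_dense U (edom f)"
  shows "(\<forall>x\<in>convex hull U. f x = closure_fun f U x) \<and>
         (\<forall>x. closure_fun f U x = closure_fun f (convex hull U) x)"
proof -
  have hull: "convex hull U \<subseteq> epi_fibre_in f (closure (epi_on f U))"
  proof (rule convex_hull_subset_radially_closed)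
    show "radially_closed (edom f) (epi_fibre_in f (closure (epi_on f U)))"
      by (rule radially_closed_epi_fibre_in[OF assms(1,3) closed_closure])
    show "closed_segment x y \<subseteq> closure (closed_segment x y \<inter> U)" if "x \<in> U" "y \<in> U" for x y
      using assms(6) that unfolding self_segment_dense_def by blast
  qed (use assms(1,3,5) convex_edom subset_epi_fibre_in_closure[OF assms(5)] in auto)
  have "f x = closure_fun f U x" if "x \<in> convex hull U" for x
    using le_closure_fun[OF assms(4)] closure_fun_le hull that by (blast intro: antisym)
  moreover have "closure (epi_on f (convex hull U)) = closure (epi_on f U)"
    using hull by (intro closure_epi_on_eq hull_subset)
  ultimately show ?thesis unfolding closure_fun_def by simp
qed

end
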